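(* The $3N$ functions $E_m^{(k)}$ ($k=1,2,3$; $m=0,1,\dots,N-1$) are functionally independent on a dense open subset of $\mathbb R^{6N}$; that is, there is a dense open subset of $\mathbb R^{6N}$ at every point of which the Jacobian matrix of $(E_0^{(1)},\dots,E_{N-1}^{(1)},E_0^{(2)},\dots,E_{N-1}^{(2)},E_0^{(3)},\dots,E_{N-1}^{(3)})$ with respect to the $6N$ real coordinates $(\operatorname{Re}\phi_{j\alpha},\operatorname{Im}\phi_{j\alpha})$ has rank $3N$.
   Context: Fix $N\ge1$ and distinct nonzero real $\lambda_1,\dots,\lambda_N$. Phase space $\mathbb C^{3N}\cong\mathbb R^{6N}$ with complex coordinates $\phi_{j\alpha}$ ($j=1,2,3$, $\alpha=1,\dots,N$). $L(\lambda)=C+\sum_\alpha(\lambda-\lambda_\alpha)^{-1}F_\alpha F_\alpha^*$ with $C=\operatorname{diag}(1,-1,0)$, $F_\alpha=(\phi_{1\alpha},\phi_{2\alpha},\phi_{3\alpha})^T$. Define $p_1,p_2,p_3$ by $\det(\xi I-L(\lambda))=\xi^3-p_1(\lambda)\xi^2+p_2(\lambda)\xi-p_3(\lambda)$, and $E_m^{(k)}$ by the Laurent expansion $p_k(\lambda)=\sum_{m=-1}^\infty E_m^{(k)}\lambda^{-m-1}$ for $|\lambda|>\max_\alpha|\lambda_\alpha|$. Each $E_m^{(k)}$ is a real-valued polynomial function of $\phi_{j\alpha},\bar\phi_{j\alpha}$. *)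

theory Defs
  imports "HOL-Analysis.Analysis" "HOL-Computational_Algebra.Polynomial"
begin

text \<open>Index conventions: matrix/vector indices j = 1,2,3 are the elements 1,2,3 of the
numeral type 3 (where 3 = 0 in that type).  Particles alpha range over a finite type 'n,
so N = CARD('n).  A phase-space point is phi :: complex^3^'n with phi$alpha$j = phi_{j alpha}.\<close>

definition Cmat :: "complex^3^3" where
  "Cmat = (\<chi> i j. if i = j \<and> i = 1 then 1 else if i = j \<and> i = 2 then -1 else 0)"

definition Lmat :: "('n::finite \<Rightarrow> real) \<Rightarrow> complex^3^'n \<Rightarrow> complex \<Rightarrow> complex^3^3" where
  "Lmat lam phi z = Cmat + (\<Sum>a\<in>UNIV. (\<chi> i j. inverse (z - complex_of_real (lam a))
        * (phi$a$i * cnj (phi$a$j))))"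

definition charpoly3 :: "complex^3^3 \<Rightarrow> complex poly" where
  "charpoly3 A = det (\<chi> i j. (if i = j then [:0, 1:] else 0) - [:A$i$j:])"

text \<open>det(xi I - A) = xi^3 - p1 xi^2 + p2 xi - p3, i.e. p_k = (-1)^k * coeff (3-k)\<close>
definition pcoef :: "nat \<Rightarrow> complex^3^3 \<Rightarrow> complex" where
  "pcoef k A = (-1)^k * coeff (charpoly3 A) (3 - k)"

definition pfun :: "('n::finite \<Rightarrow> real) \<Rightarrow> nat \<Rightarrow> complex^3^'n \<Rightarrow> complex \<Rightarrow> complex" where
  "pfun lam k phi z = pcoef k (Lmat lam phi z)"

text \<open>Laurent coefficients at infinity: p_k(z) = sum_{n>=0} c n * z^(-n) for
 |z| > max |lambda_alpha|; thus c n = E_{n-1}^{(k)}.\<close>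
definition laurent_coeffs :: "('n::finite \<Rightarrow> real) \<Rightarrow> nat \<Rightarrow> complex^3^'n \<Rightarrow> nat \<Rightarrow> complex" where
  "laurent_coeffs lam k phi = (THE c. \<forall>z. norm z > Max ((\<lambda>a. \<bar>lam a\<bar>) ` UNIV) \<longrightarrow>
        (\<lambda>n. c n * inverse z ^ n) sums pfun lam k phi z)"

definition Ecoef :: "('n::finite \<Rightarrow> real) \<Rightarrow> nat \<Rightarrow> nat \<Rightarrow> complex^3^'n \<Rightarrow> real" where
  "Ecoef lam k m phi = Re (laurent_coeffs lam k phi (m + 1))"

definition phi_of :: "real^('n::finite \<times> 3 \<times> 2) \<Rightarrow> complex^3^'n" where
  "phi_of x = (\<chi> a j. Complex (x$(a, j, 1)) (x$(a, j, 2)))"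

definition knat :: "3 \<Rightarrow> nat" where
  "knat k = (if k = 1 then 1 else if k = 2 then 2 else 3)"

text \<open>The vector of the 3N functions; row (k, a) is E_{iota a}^{(k)}, where iota enumerates 'n as 0..N-1.\<close>
definition Emap :: "('n::finite \<Rightarrow> real) \<Rightarrow> ('n \<Rightarrow> nat) \<Rightarrow> real^('n \<times> 3 \<times> 2) \<Rightarrow> real^(3 \<times> 'n)" where
  "Emap lam iota x = (\<chi> r. Ecoef lam (knat (fst r)) (iota (snd r)) (phi_of x))"

end

theory Submission
  imports Defs
begin

text \<open>
  Every E_m^(k) is a real polynomial in the coordinates whose lowest-order part is the
  diagonal quadratic form sum_alpha lambda_alpha^m sum_j s_kj |phi_(j alpha)|^2, with
  s_kj = quad_sign k j, coming from the part of p_k(C + X) that is linear in X = L - C;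
  all other terms contain at least two entries of X and so have order at least 4.  Along
  the ray e (1, ..., 1) the Jacobian is therefore e (J + O(e^2)), and the 3N columns of J
  belonging to the coordinates Re phi_(j alpha) form twice the Kronecker product of the
  Vandermonde matrix (lambda_alpha^m) with the invertible 3 x 3 matrix (s_kj).  So the
  corresponding 3N x 3N minor of the Jacobian is nonzero for small e \<noteq> 0.  This minor is
  a polynomial function, hence nonzero on an open dense set, on which the Jacobian has
  rank 3N.
\<close>

section \<open>Polynomial functions on \<open>real^'v\<close>\<close>

text \<open>\<open>polyfun k f\<close>: \<open>f\<close> is a real polynomial in the coordinates all of whose monomials
  have degree at least \<open>k\<close>.\<close>

inductive polyfun :: "nat \<Rightarrow> (real^'v::finite \<Rightarrow> real) \<Rightarrow> bool" where
  polyfun_const: "polyfun 0 (\<lambda>x. c)"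
| polyfun_zero: "polyfun k (\<lambda>x. 0)"
| polyfun_coord: "polyfun 1 (\<lambda>x. x$v)"
| polyfun_add: "polyfun k f \<Longrightarrow> polyfun k g \<Longrightarrow> polyfun k (\<lambda>x. f x + g x)"
| polyfun_mult: "polyfun i f \<Longrightarrow> polyfun j g \<Longrightarrow> polyfun (i + j) (\<lambda>x. f x * g x)"
| polyfun_Suc: "polyfun (Suc k) f \<Longrightarrow> polyfun k f"

lemma polyfun_mono: "polyfun k f \<Longrightarrow> j \<le> k \<Longrightarrow> polyfun j f"
proof (induction k arbitrary: j)
  case (Suc k)
  then show ?case by (metis polyfun_Suc le_Suc_eq)
qed simp

lemma polyfun_mult_le: "polyfun i f \<Longrightarrow> polyfun j g \<Longrightarrow> k \<le> i + j \<Longrightarrow> polyfun k (\<lambda>x. f x * g x)"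
  using polyfun_mult polyfun_mono by blast

lemma polyfun_cmult: "polyfun k f \<Longrightarrow> polyfun k (\<lambda>x. c * f x)"
  using polyfun_mult[OF polyfun_const[of c]] by simp

lemma polyfun_neg: "polyfun k f \<Longrightarrow> polyfun k (\<lambda>x. - f x)"
  using polyfun_cmult[of k f "-1"] by simp

lemma polyfun_diff: "polyfun k f \<Longrightarrow> polyfun k g \<Longrightarrow> polyfun k (\<lambda>x. f x - g x)"
  using polyfun_add[OF _ polyfun_neg] by simp

lemma polyfun_sum:
  "finite A \<Longrightarrow> (\<And>a. a \<in> A \<Longrightarrow> polyfun k (f a)) \<Longrightarrow> polyfun k (\<lambda>x. \<Sum>a\<in>A. f a x)"
  by (induction A rule: finite_induct) (auto intro: polyfun_zero polyfun_add)

lemma polyfun_prod: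
  "finite A \<Longrightarrow> (\<And>a. a \<in> A \<Longrightarrow> polyfun 0 (f a)) \<Longrightarrow> polyfun 0 (\<lambda>x. \<Prod>a\<in>A. f a x)"
  by (induction A rule: finite_induct) (simp_all add: polyfun_const polyfun_mult_le[of 0 _ 0])

lemma polyfun_det:
  fixes A :: "real^'v::finite \<Rightarrow> real^'n::finite^'n"
  assumes "\<And>i j. polyfun 0 (\<lambda>x. A x $ i $ j)"
  shows "polyfun 0 (\<lambda>x. det (A x))"
  unfolding det_def by (intro polyfun_sum polyfun_cmult polyfun_prod assms) auto

lemma polyfun_scaled_bound:
  assumes "polyfun k f"
  shows "\<exists>C. \<forall>e::real. \<bar>e\<bar> \<le> 1 \<longrightarrow> \<bar>f (e *\<^sub>R x)\<bar> \<le> C * \<bar>e\<bar>^k"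
  using assms
proof (induction rule: polyfun.induct)
  case (polyfun_const c)
  show ?case by (intro exI[of _ "\<bar>c\<bar>"]) auto
next
  case (polyfun_zero k)
  show ?case by (intro exI[of _ 0]) auto
next
  case (polyfun_coord v)
  show ?case by (intro exI[of _ "\<bar>x$v\<bar>"]) (auto simp: abs_mult)
next
  case (polyfun_add k f g)
  then obtain C D where C: "\<forall>e::real. \<bar>e\<bar> \<le> 1 \<longrightarrow> \<bar>f (e *\<^sub>R x)\<bar> \<le> C * \<bar>e\<bar>^k"
    and D: "\<forall>e::real. \<bar>e\<bar> \<le> 1 \<longrightarrow> \<bar>g (e *\<^sub>R x)\<bar> \<le> D * \<bar>e\<bar>^k" by blast
  have "\<bar>f (e *\<^sub>R x) + g (e *\<^sub>R x)\<bar> \<le> (C + D) * \<bar>e\<bar>^k" if "\<bar>e\<bar> \<le> 1" for e :: real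
  proof -
    have "\<bar>f (e *\<^sub>R x)\<bar> \<le> C * \<bar>e\<bar>^k" "\<bar>g (e *\<^sub>R x)\<bar> \<le> D * \<bar>e\<bar>^k"
      using C D that by blast+
    then show ?thesis by (simp add: distrib_right abs_triangle_ineq[THEN order.trans] add_mono)
  qed
  then show ?case by blast
next
  case (polyfun_mult i f j g)
  then obtain C D where C: "\<forall>e::real. \<bar>e\<bar> \<le> 1 \<longrightarrow> \<bar>f (e *\<^sub>R x)\<bar> \<le> C * \<bar>e\<bar>^i"
    and D: "\<forall>e::real. \<bar>e\<bar> \<le> 1 \<longrightarrow> \<bar>g (e *\<^sub>R x)\<bar> \<le> D * \<bar>e\<bar>^j" by blast
  have "\<bar>f (e *\<^sub>R x) * g (e *\<^sub>R x)\<bar> \<le> (C * D) * \<bar>e\<bar>^(i + j)" if "\<bar>e\<bar> \<le> 1" for e :: real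
  proof -
    have f: "\<bar>f (e *\<^sub>R x)\<bar> \<le> C * \<bar>e\<bar>^i" and g: "\<bar>g (e *\<^sub>R x)\<bar> \<le> D * \<bar>e\<bar>^j"
      using C D that by blast+
    moreover have "0 \<le> C * \<bar>e\<bar>^i"
      using f abs_ge_zero order.trans by blast
    ultimately have "\<bar>f (e *\<^sub>R x)\<bar> * \<bar>g (e *\<^sub>R x)\<bar> \<le> (C * \<bar>e\<bar>^i) * (D * \<bar>e\<bar>^j)"
      by (intro mult_mono) simp_all
    then show ?thesis by (simp add: abs_mult power_add mult_ac)
  qed
  then show ?case by blast
next
  case (polyfun_Suc k f)
  then obtain C where C: "\<forall>e::real. \<bar>e\<bar> \<le> 1 \<longrightarrow> \<bar>f (e *\<^sub>R x)\<bar> \<le> C * \<bar>e\<bar>^Suc k" by blast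
  have "\<bar>f (e *\<^sub>R x)\<bar> \<le> \<bar>C\<bar> * \<bar>e\<bar>^k" if "\<bar>e\<bar> \<le> 1" for e :: real
  proof -
    have "C * \<bar>e\<bar>^Suc k \<le> \<bar>C\<bar> * \<bar>e\<bar>^Suc k" by (rule mult_right_mono) auto
    also have "\<dots> \<le> \<bar>C\<bar> * \<bar>e\<bar>^k" using that by (intro mult_left_mono power_decreasing) auto
    finally show ?thesis using C that by auto
  qed
  then show ?case by blast
qed

lemma polyfun_scaled_tendsto_0:
  assumes "polyfun (Suc k) f"
  shows "((\<lambda>e. f (e *\<^sub>R x) / e ^ k) \<longlongrightarrow> 0) (at 0)"
proof -
  obtain C where C: "\<forall>e::real. \<bar>e\<bar> \<le> 1 \<longrightarrow> \<bar>f (e *\<^sub>R x)\<bar> \<le> C * \<bar>e\<bar>^Suc k"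
    using polyfun_scaled_bound[OF assms] by blast
  have bound: "norm (f (e *\<^sub>R x) / e ^ k) \<le> C * \<bar>e\<bar>" if e: "e \<noteq> 0" "\<bar>e\<bar> \<le> 1" for e :: real
  proof -
    have "norm (f (e *\<^sub>R x) / e ^ k) = \<bar>f (e *\<^sub>R x)\<bar> / \<bar>e\<bar> ^ k" by (simp add: abs_div power_abs)
    also have "\<dots> \<le> C * \<bar>e\<bar> ^ Suc k / \<bar>e\<bar> ^ k" using C e by (intro divide_right_mono) auto
    also have "\<dots> = C * \<bar>e\<bar>" using e by simp
    finally show ?thesis .
  qed
  have "eventually (\<lambda>e. norm (f (e *\<^sub>R x) / e ^ k) \<le> C * \<bar>e\<bar>) (at (0::real))"
    unfolding eventually_at_le using bound by (intro exI[of _ 1]) auto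
  moreover have "((\<lambda>e::real. C * \<bar>e\<bar>) \<longlongrightarrow> 0) (at 0)"
    by (auto intro!: tendsto_eq_intros)
  ultimately show ?thesis by (rule Lim_null_comparison)
qed

lemma polyfun_on_line:
  assumes "polyfun k f"
  shows "\<exists>p. \<forall>t. f (x + t *\<^sub>R (y - x)) = poly p t"
  using assms
proof (induction rule: polyfun.induct)
  case (polyfun_const c)
  show ?case by (intro exI[of _ "[:c:]"]) simp
next
  case (polyfun_zero k)
  show ?case by (intro exI[of _ 0]) simp
next
  case (polyfun_coord v)
  show ?case by (intro exI[of _ "[:x$v, y$v - x$v:]"]) (simp add: algebra_simps)
next
  case (polyfun_add k f g)
  then obtain p q where "\<forall>t. f (x + t *\<^sub>R (y - x)) = poly p t" "\<forall>t. g (x + t *\<^sub>R (y - x)) = poly q t"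
    by blast
  then show ?case by (intro exI[of _ "p + q"]) simp
next
  case (polyfun_mult i f j g)
  then obtain p q where "\<forall>t. f (x + t *\<^sub>R (y - x)) = poly p t" "\<forall>t. g (x + t *\<^sub>R (y - x)) = poly q t"
    by blast
  then show ?case by (intro exI[of _ "p * q"]) simp
qed

lemma polyfun_has_derivative:
  assumes "polyfun k f"
  shows "\<exists>d. (\<forall>v. polyfun (k - 1) (d v)) \<and>
           (\<forall>x. (f has_derivative (\<lambda>h. \<Sum>v\<in>UNIV. h$v * d v x)) (at x))"
  using assms
proof (induction rule: polyfun.induct)
  case (polyfun_const c)
  show ?case by (intro exI[of _ "\<lambda>v x. 0"]) (simp add: polyfun.polyfun_zero)
next
  case (polyfun_zero k)
  show ?case by (intro exI[of _ "\<lambda>v x. 0"]) (simp add: polyfun.polyfun_zero)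
next
  case (polyfun_coord w)
  have "(\<lambda>h::real^'a. \<Sum>v\<in>UNIV. h$v * (if v = w then 1 else 0)) = (\<lambda>h. h$w)"
    by (simp add: if_distrib cong: if_cong)
  moreover have "((\<lambda>x::real^'a. x$w) has_derivative (\<lambda>h. h$w)) (at x)" for x
    by (rule bounded_linear.has_derivative[OF bounded_linear_vec_nth has_derivative_ident])
  ultimately show ?case
    by (intro exI[of _ "\<lambda>v x. if v = w then 1 else 0"]) (simp add: polyfun.polyfun_const)
next
  case (polyfun_add k f g)
  then obtain df dg where
    f: "\<forall>v. polyfun (k - 1) (df v)" "\<forall>x. (f has_derivative (\<lambda>h. \<Sum>v\<in>UNIV. h$v * df v x)) (at x)" and
    g: "\<forall>v. polyfun (k - 1) (dg v)" "\<forall>x. (g has_derivative (\<lambda>h. \<Sum>v\<in>UNIV. h$v * dg v x)) (at x)"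
    by blast
  have "((\<lambda>x. f x + g x) has_derivative (\<lambda>h. \<Sum>v\<in>UNIV. h$v * (df v x + dg v x))) (at x)" for x
    using has_derivative_add[OF f(2)[rule_format] g(2)[rule_format]]
    by (simp add: distrib_left sum.distrib)
  then show ?case
    using f(1) g(1) by (intro exI[of _ "\<lambda>v x. df v x + dg v x"]) (simp add: polyfun.polyfun_add)
next
  case (polyfun_mult i f j g)
  then obtain df dg where
    f: "\<forall>v. polyfun (i - 1) (df v)" "\<forall>x. (f has_derivative (\<lambda>h. \<Sum>v\<in>UNIV. h$v * df v x)) (at x)" and
    g: "\<forall>v. polyfun (j - 1) (dg v)" "\<forall>x. (g has_derivative (\<lambda>h. \<Sum>v\<in>UNIV. h$v * dg v x)) (at x)"
    by blast
  have "polyfun (i + j - 1) (\<lambda>x. df v x * g x + f x * dg v x)" for v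
    using f(1) g(1) polyfun_mult.hyps
    by (intro polyfun.polyfun_add polyfun_mult_le[of "i - 1" _ j] polyfun_mult_le[of i _ "j - 1"]) auto
  moreover have "((\<lambda>x. f x * g x) has_derivative
      (\<lambda>h. \<Sum>v\<in>UNIV. h$v * (df v x * g x + f x * dg v x))) (at x)" for x
    using has_derivative_mult[OF f(2)[rule_format] g(2)[rule_format]]
    by (simp add: sum_distrib_left sum_distrib_right sum.distrib algebra_simps)
  ultimately show ?case by (intro exI[of _ "\<lambda>v x. df v x * g x + f x * dg v x"]) blast
next
  case (polyfun_Suc k f)
  then obtain d where "\<forall>v. polyfun k (d v)"
    "\<forall>x. (f has_derivative (\<lambda>h. \<Sum>v\<in>UNIV. h$v * d v x)) (at x)"
    by auto
  then show ?case by (intro exI[of _ d]) (auto intro: polyfun_mono)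
qed

lemma polyfun_continuous_on:
  assumes "polyfun k f"
  shows "continuous_on UNIV f"
proof -
  obtain d where "\<forall>x. (f has_derivative (\<lambda>h. \<Sum>v\<in>UNIV. h$v * d v x)) (at x)"
    using polyfun_has_derivative[OF assms] by blast
  then show ?thesis by (auto intro: continuous_at_imp_continuous_on has_derivative_continuous)
qed

lemma polyfun_nonzero_open_dense:
  assumes f: "polyfun k f" and x1: "f x1 \<noteq> 0"
  shows "open {x. f x \<noteq> 0}" "closure {x. f x \<noteq> 0} = UNIV"
proof -
  show "open {x. f x \<noteq> 0}"
    using open_Collect_neq[OF polyfun_continuous_on[OF f] continuous_on_const] .
  have "y \<in> closure {x. f x \<noteq> 0}" for y
  proof -
    define g where "g t = x1 + t *\<^sub>R (y - x1)" for t :: real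
    obtain p where p: "\<And>t. f (g t) = poly p t"
      using polyfun_on_line[OF f] unfolding g_def by blast
    have "poly p 0 \<noteq> 0" using p[of 0] x1 by (simp add: g_def)
    then have "finite {t. poly p t = 0}" by (intro poly_roots_finite) auto
    then have "closure (- {t. poly p t = 0}) = UNIV"
      by (simp add: closure_complement empty_interior_finite)
    moreover have "g ` closure (- {t. poly p t = 0}) \<subseteq> closure {x. f x \<noteq> 0}"
    proof (rule image_closure_subset)
      show "continuous_on (closure (- {t. poly p t = 0})) g"
        by (auto simp: g_def intro!: continuous_intros)
      have "g ` (- {t. poly p t = 0}) \<subseteq> {x. f x \<noteq> 0}"
        using p by auto
      then show "g ` (- {t. poly p t = 0}) \<subseteq> closure {x. f x \<noteq> 0}"
        using closure_subset by blast
    qed simp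
    ultimately have "g 1 \<in> closure {x. f x \<noteq> 0}" by auto
    then show ?thesis by (simp add: g_def)
  qed
  then show "closure {x. f x \<noteq> 0} = UNIV" by blast
qed

section \<open>Jacobians of polynomial maps\<close>

lemma jacobian_eqI:
  fixes F :: "real^'v::finite \<Rightarrow> real^'r::finite"
  assumes "(F has_derivative (\<lambda>h. J *v h)) (at x)"
  shows "jacobian F (at x) = J"
  using frechet_derivative_at[OF assms, symmetric] by (simp add: jacobian_def)

lemma has_derivative_vec_nth_iff:
  fixes F :: "'a::real_normed_vector \<Rightarrow> real^'r::finite"
  shows "(F has_derivative F') (at x) \<longleftrightarrow> (\<forall>r. ((\<lambda>x. F x $ r) has_derivative (\<lambda>h. F' h $ r)) (at x))"
  by (subst has_derivative_componentwise_within) (auto simp: Basis_vec_def inner_axis)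

lemma polyfun_vec_jacobian:
  fixes F :: "real^'v::finite \<Rightarrow> real^'r::finite"
  assumes "\<And>r. polyfun k (\<lambda>x. F x $ r)"
  shows "F differentiable (at x)" "polyfun (k - 1) (\<lambda>x. jacobian F (at x) $ r $ v)"
proof -
  have "\<forall>r. \<exists>d. (\<forall>v. polyfun (k - 1) (d v)) \<and>
      (\<forall>x. ((\<lambda>x. F x $ r) has_derivative (\<lambda>h. \<Sum>v\<in>UNIV. h$v * d v x)) (at x))"
    using polyfun_has_derivative[OF assms] by blast
  then obtain d where d: "\<And>r v. polyfun (k - 1) (d r v)"
    "\<And>r x. ((\<lambda>x. F x $ r) has_derivative (\<lambda>h. \<Sum>v\<in>UNIV. h$v * d r v x)) (at x)"
    unfolding choice_iff by blast
  have F': "(F has_derivative (\<lambda>h. (\<chi> r v. d r v x) *v h)) (at x)" for x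
    unfolding has_derivative_vec_nth_iff
    by (simp add: d(2) matrix_vector_mult_def mult.commute)
  then show "F differentiable (at x)"
    by (auto simp: differentiable_def)
  show "polyfun (k - 1) (\<lambda>x. jacobian F (at x) $ r $ v)"
    using d(1) by (simp add: jacobian_eqI[OF F'])
qed

lemma matrix_vector_mult_sum_axis:
  fixes A :: "real^'v::finite^'r::finite" and \<sigma> :: "'r \<Rightarrow> 'v"
  shows "A *v (\<Sum>j\<in>UNIV. u $ j *\<^sub>R axis (\<sigma> j) 1) = (\<chi> i j. A $ i $ \<sigma> j) *v u"
proof -
  have "(A *v (\<Sum>j\<in>UNIV. u $ j *\<^sub>R axis (\<sigma> j) 1)) $ i = ((\<chi> i j. A $ i $ \<sigma> j) *v u) $ i" for i
  proof -
    have "(A *v (\<Sum>j\<in>UNIV. u $ j *\<^sub>R axis (\<sigma> j) 1)) $ i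
      = (\<Sum>v\<in>UNIV. \<Sum>j\<in>UNIV. A $ i $ v * (u $ j * (if v = \<sigma> j then 1 else 0)))"
      by (simp add: matrix_vector_mult_def sum_component axis_def sum_distrib_left)
    also have "\<dots> = (\<Sum>j\<in>UNIV. A $ i $ \<sigma> j * u $ j)"
      by (subst sum.swap) (simp add: if_distrib if_distribR cong: if_cong)
    finally show ?thesis by (simp add: matrix_vector_mult_def)
  qed
  then show ?thesis by (simp add: vec_eq_iff)
qed

lemma rank_eq_card_if_minor_nonzero:
  fixes A :: "real^'v::finite^'r::finite" and \<sigma> :: "'r \<Rightarrow> 'v"
  assumes "det (\<chi> i j. A $ i $ \<sigma> j) \<noteq> 0"
  shows "rank A = CARD('r)"
proof -
  let ?B = "\<chi> i j. A $ i $ \<sigma> j"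
  have "rank ?B = CARD('r)"
    using assms rank_bound[of ?B] det_eq_0_rank[of ?B] by linarith
  then have "surj ((*v) ?B)" by (simp only: full_rank_surjective)
  then have "surj ((*v) A)"
    unfolding surj_def using matrix_vector_mult_sum_axis[where A=A and \<sigma>=\<sigma>] by metis
  then show ?thesis by (simp add: full_rank_surjective)
qed

lemma polyfun_map_full_rank_open_dense:
  fixes F :: "real^'v::finite \<Rightarrow> real^'r::finite" and \<sigma> :: "'r \<Rightarrow> 'v"
  assumes F: "\<And>r. polyfun 0 (\<lambda>x. F x $ r)"
    and x1: "det (\<chi> i j. jacobian F (at x1) $ i $ \<sigma> j) \<noteq> 0"
  shows "\<exists>U. open U \<and> closure U = UNIV \<and>
           (\<forall>x\<in>U. F differentiable (at x) \<and> rank (jacobian F (at x)) = CARD('r))"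
proof -
  let ?D = "\<lambda>x. det (\<chi> i j. jacobian F (at x) $ i $ \<sigma> j)"
  have "polyfun 0 ?D"
    using polyfun_vec_jacobian(2)[OF F] by (intro polyfun_det) simp
  then have "open {x. ?D x \<noteq> 0}" "closure {x. ?D x \<noteq> 0} = UNIV"
    using polyfun_nonzero_open_dense x1 by blast+
  then show ?thesis
    using polyfun_vec_jacobian(1)[OF F] rank_eq_card_if_minor_nonzero
    by (intro exI[of _ "{x. ?D x \<noteq> 0}"]) auto
qed

lemma tendsto_det [tendsto_intros]:
  fixes A :: "'a \<Rightarrow> real^'n::finite^'n"
  assumes "(A \<longlongrightarrow> B) F"
  shows "((\<lambda>x. det (A x)) \<longlongrightarrow> det B) F"
  unfolding det_def by (intro tendsto_intros assms)

lemma det_scaleR: "det (c *\<^sub>R A) = c ^ CARD('n) * det (A :: real^'n::finite^'n)"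
  unfolding det_def by (simp add: prod.distrib sum_distrib_left mult_ac)

lemma det_nonzero_of_scaled_tendsto:
  fixes A :: "real \<Rightarrow> real^'n::finite^'n"
  assumes "((\<lambda>e. A e /\<^sub>R e) \<longlongrightarrow> B) (at 0)" and "det B \<noteq> 0"
  shows "\<exists>e. det (A e) \<noteq> 0"
proof -
  have "eventually (\<lambda>e. det (A e /\<^sub>R e) \<noteq> 0) (at 0)"
    using tendsto_det[OF assms(1)] assms(2) by (rule tendsto_imp_eventually_ne)
  then obtain e where "det (A e /\<^sub>R e) \<noteq> 0"
    using eventually_happens' trivial_limit_at by blast
  then show ?thesis by (auto simp: det_scaleR)
qed

definition diag_quad :: "real^'v::finite^'r::finite \<Rightarrow> real^'v \<Rightarrow> real^'r" where
  "diag_quad C x = (\<chi> r. \<Sum>v\<in>UNIV. C $ r $ v * (x $ v)\<^sup>2)"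

lemma polyfun_diag_quad: "polyfun 2 (\<lambda>x. diag_quad C x $ r)"
  unfolding diag_quad_def power2_eq_square
  by (auto intro!: polyfun_sum polyfun_cmult polyfun_mult_le[OF polyfun_coord polyfun_coord])

lemma has_derivative_diag_quad:
  "(diag_quad C has_derivative (\<lambda>h. (\<chi> r v. 2 * C $ r $ v * x $ v) *v h)) (at x)"
proof -
  have "((\<lambda>x. \<Sum>v\<in>UNIV. C $ r $ v * (x $ v * x $ v)) has_derivative
      (\<lambda>h. \<Sum>v\<in>UNIV. C $ r $ v * (x $ v * h $ v + h $ v * x $ v))) (at x)" for r
    by (intro has_derivative_sum has_derivative_mult_right has_derivative_mult
        bounded_linear.has_derivative[OF bounded_linear_vec_nth] has_derivative_ident)
  then show ?thesis
    unfolding has_derivative_vec_nth_iff diag_quad_def power2_eq_square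
    by (simp add: matrix_vector_mult_def algebra_simps)
qed

lemma diag_quad_plus_higher_minor_nonzero:
  fixes C :: "real^'v::finite^'r::finite" and R :: "real^'v \<Rightarrow> real^'r" and \<sigma> :: "'r \<Rightarrow> 'v"
  assumes R: "\<And>r. polyfun 3 (\<lambda>x. R x $ r)"
    and C: "det (\<chi> i j. C $ i $ \<sigma> j) \<noteq> 0"
  shows "\<exists>x. det (\<chi> i j. jacobian (\<lambda>x. diag_quad C x + R x) (at x) $ i $ \<sigma> j) \<noteq> 0"
proof -
  define x0 :: "real^'v" where "x0 = (\<chi> v. 1)"
  let ?J = "\<lambda>x. jacobian (\<lambda>x. diag_quad C x + R x) (at x)"
  have J: "?J x = (\<chi> r v. 2 * C $ r $ v * x $ v) + jacobian R (at x)" for x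
  proof (rule jacobian_eqI)
    have "(R has_derivative (\<lambda>h. jacobian R (at x) *v h)) (at x)"
      using polyfun_vec_jacobian(1)[OF R] jacobian_works by blast
    then show "((\<lambda>x. diag_quad C x + R x) has_derivative
        (\<lambda>h. ((\<chi> r v. 2 * C $ r $ v * x $ v) + jacobian R (at x)) *v h)) (at x)"
      by (auto intro: has_derivative_eq_rhs[OF has_derivative_add[OF has_derivative_diag_quad]]
          simp: matrix_vector_mult_add_rdistrib)
  qed
  have higher: "((\<lambda>e. jacobian R (at (e *\<^sub>R x0)) $ i $ \<sigma> j / e) \<longlongrightarrow> 0) (at 0)" for i j
  proof -
    have "polyfun (Suc 1) (\<lambda>x. jacobian R (at x) $ i $ \<sigma> j)"
      using polyfun_vec_jacobian(2)[OF R] by (simp add: numeral_3_eq_3)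
    then show ?thesis using polyfun_scaled_tendsto_0 by fastforce
  qed
  have "((\<lambda>e. (\<chi> i j. ?J (e *\<^sub>R x0) $ i $ \<sigma> j) /\<^sub>R e) \<longlongrightarrow> 2 *\<^sub>R (\<chi> i j. C $ i $ \<sigma> j)) (at 0)"
  proof (rule vec_tendstoI, rule vec_tendstoI)
    fix i j
    have "((\<lambda>e. 2 * C $ i $ \<sigma> j + jacobian R (at (e *\<^sub>R x0)) $ i $ \<sigma> j / e) \<longlongrightarrow> 2 * C $ i $ \<sigma> j) (at 0)"
      using tendsto_add[OF tendsto_const higher] by simp
    moreover have "eventually (\<lambda>e. 2 * C $ i $ \<sigma> j + jacobian R (at (e *\<^sub>R x0)) $ i $ \<sigma> j / e
        = ((\<chi> i j. ?J (e *\<^sub>R x0) $ i $ \<sigma> j) /\<^sub>R e) $ i $ j) (at 0)"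
      unfolding eventually_at_filter by (auto simp: J x0_def divide_simps intro!: always_eventually)
    ultimately show "((\<lambda>e. ((\<chi> i j. ?J (e *\<^sub>R x0) $ i $ \<sigma> j) /\<^sub>R e) $ i $ j) \<longlongrightarrow>
        (2 *\<^sub>R (\<chi> i j. C $ i $ \<sigma> j)) $ i $ j) (at 0)"
      by (simp add: Lim_transform_eventually)
  qed
  moreover have "det (2 *\<^sub>R (\<chi> i j. C $ i $ \<sigma> j)) \<noteq> 0"
    using C by (simp add: det_scaleR)
  ultimately have "\<exists>e. det (\<chi> i j. ?J (e *\<^sub>R x0) $ i $ \<sigma> j) \<noteq> 0"
    by (rule det_nonzero_of_scaled_tendsto)
  then show ?thesis by blast
qed

section \<open>Expansions at infinity\<close>

definition cpolyfun :: "nat \<Rightarrow> (real^'v::finite \<Rightarrow> complex) \<Rightarrow> bool" where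
  "cpolyfun k g \<longleftrightarrow> polyfun k (\<lambda>x. Re (g x)) \<and> polyfun k (\<lambda>x. Im (g x))"

lemma cpolyfun_const: "cpolyfun 0 (\<lambda>x. c)"
  by (simp add: cpolyfun_def polyfun_const)

lemma cpolyfun_zero: "cpolyfun k (\<lambda>x. 0)"
  by (simp add: cpolyfun_def polyfun_zero)

lemma cpolyfun_add: "cpolyfun k f \<Longrightarrow> cpolyfun k g \<Longrightarrow> cpolyfun k (\<lambda>x. f x + g x)"
  by (simp add: cpolyfun_def polyfun_add)

lemma cpolyfun_diff: "cpolyfun k f \<Longrightarrow> cpolyfun k g \<Longrightarrow> cpolyfun k (\<lambda>x. f x - g x)"
  by (simp add: cpolyfun_def polyfun_diff)

lemma cpolyfun_mult_le:
  "cpolyfun i f \<Longrightarrow> cpolyfun j g \<Longrightarrow> k \<le> i + j \<Longrightarrow> cpolyfun k (\<lambda>x. f x * g x)"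
  unfolding cpolyfun_def by (auto intro!: polyfun_diff polyfun_add polyfun_mult_le)

lemma cpolyfun_cnj: "cpolyfun k f \<Longrightarrow> cpolyfun k (\<lambda>x. cnj (f x))"
  unfolding cpolyfun_def by (auto intro: polyfun_neg)

lemma cpolyfun_sum:
  "finite A \<Longrightarrow> (\<And>a. a \<in> A \<Longrightarrow> cpolyfun k (f a)) \<Longrightarrow> cpolyfun k (\<lambda>x. \<Sum>a\<in>A. f a x)"
  unfolding cpolyfun_def by (auto simp: Re_sum Im_sum intro!: polyfun_sum)

lemma cpolyfun_phi_of: "cpolyfun 1 (\<lambda>x. phi_of x $ a $ j)"
  unfolding cpolyfun_def phi_of_def by (simp add: polyfun_coord[simplified])

definition has_expansion_at_infinity ::
    "real \<Rightarrow> ('x \<Rightarrow> complex \<Rightarrow> complex) \<Rightarrow> (nat \<Rightarrow> 'x \<Rightarrow> complex) \<Rightarrow> bool" where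
  "has_expansion_at_infinity M G a \<longleftrightarrow>
     (\<forall>x z. M < norm z \<longrightarrow> (\<lambda>n. a n x * inverse z ^ n) sums G x z)"

lemma has_expansion_at_infinity_add:
  "has_expansion_at_infinity M F a \<Longrightarrow> has_expansion_at_infinity M G b \<Longrightarrow>
   has_expansion_at_infinity M (\<lambda>x z. F x z + G x z) (\<lambda>n x. a n x + b n x)"
  unfolding has_expansion_at_infinity_def by (auto simp: distrib_right intro: sums_add)

lemma has_expansion_at_infinity_diff:
  "has_expansion_at_infinity M F a \<Longrightarrow> has_expansion_at_infinity M G b \<Longrightarrow>
   has_expansion_at_infinity M (\<lambda>x z. F x z - G x z) (\<lambda>n x. a n x - b n x)"
  unfolding has_expansion_at_infinity_def by (auto simp: left_diff_distrib intro: sums_diff)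

lemma has_expansion_at_infinity_cmult:
  "has_expansion_at_infinity M G a \<Longrightarrow>
   has_expansion_at_infinity M (\<lambda>x z. g x * G x z) (\<lambda>n x. g x * a n x)"
  unfolding has_expansion_at_infinity_def by (auto simp: mult.assoc intro: sums_mult)

lemma has_expansion_at_infinity_const:
  "has_expansion_at_infinity M (\<lambda>x z. g x) (\<lambda>n x. if n = 0 then g x else 0)"
proof -
  have "(\<lambda>n. (if n = 0 then g x else 0) * inverse z ^ n) = (\<lambda>n. if n = 0 then g x else 0)" for x z
    by auto
  then show ?thesis
    unfolding has_expansion_at_infinity_def using sums_single[of 0 "\<lambda>_. g _"] by simp
qed

lemma has_expansion_at_infinity_sum:
  "finite A \<Longrightarrow> (\<And>a. a \<in> A \<Longrightarrow> has_expansion_at_infinity M (G a) (c a)) \<Longrightarrow>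
   has_expansion_at_infinity M (\<lambda>x z. \<Sum>a\<in>A. G a x z) (\<lambda>n x. \<Sum>a\<in>A. c a n x)"
proof (induction A rule: finite_induct)
  case empty
  then show ?case unfolding has_expansion_at_infinity_def by simp
next
  case (insert a A)
  then show ?case using has_expansion_at_infinity_add[of M "G a" "c a"] by simp
qed

lemma has_expansion_at_infinity_inverse:
  assumes "\<bar>l\<bar> \<le> M"
  shows "has_expansion_at_infinity M (\<lambda>x z. inverse (z - of_real l))
           (\<lambda>n x. if n = 0 then 0 else of_real l ^ (n - 1))"
  unfolding has_expansion_at_infinity_def
proof (intro allI impI)
  fix x and z :: complex
  assume z: "M < norm z"
  then have z0: "z \<noteq> 0" using assms by auto
  define q where "q = of_real l * inverse z"
  have "norm q = \<bar>l\<bar> / norm z" by (simp add: q_def norm_mult norm_inverse divide_inverse)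
  also have "\<dots> < 1" using z assms z0 by (simp add: divide_simps)
  finally have q: "norm q < 1" .
  then have "(\<lambda>n. inverse z * q ^ n) sums (inverse z * (1 / (1 - q)))"
    by (intro sums_mult geometric_sums)
  moreover have "inverse z * (1 / (1 - q)) = inverse (z - of_real l)"
    using z0 q by (auto simp: q_def field_simps)
  ultimately have "(\<lambda>n. (if Suc n = 0 then 0 else of_real l ^ (Suc n - 1)) * inverse z ^ Suc n)
      sums inverse (z - of_real l)"
    by (simp add: q_def power_mult_distrib mult_ac)
  then show "(\<lambda>n. (if n = 0 then 0 else of_real l ^ (n - 1)) * inverse z ^ n) sums inverse (z - of_real l)"
    by (subst (asm) sums_Suc_iff) simp
qed

lemma has_expansion_at_infinity_mult:
  assumes "M \<ge> 0" "has_expansion_at_infinity M F a" "has_expansion_at_infinity M G b"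
  shows "has_expansion_at_infinity M (\<lambda>x z. F x z * G x z) (\<lambda>n x. \<Sum>i\<le>n. a i x * b (n - i) x)"
  unfolding has_expansion_at_infinity_def
proof (intro allI impI)
  fix x and z :: complex
  assume z: "M < norm z"
  define r where "r = (norm z + M) / 2"
  have r: "M < r" "r < norm z" using z by (auto simp: r_def)
  then have w: "M < norm (of_real r :: complex)" using assms(1) by simp
  have nz: "norm (inverse z) < norm (inverse (of_real r :: complex))"
    using r assms(1) by (simp add: norm_inverse less_imp_inverse_less)
  have "summable (\<lambda>n. a n x * inverse (of_real r) ^ n)"
    using assms(2) w unfolding has_expansion_at_infinity_def by (blast intro: sums_summable)
  then have sa: "summable (\<lambda>n. norm (a n x * inverse z ^ n))"
    by (rule powser_insidea[OF _ nz])
  have "summable (\<lambda>n. b n x * inverse (of_real r) ^ n)"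
    using assms(3) w unfolding has_expansion_at_infinity_def by (blast intro: sums_summable)
  then have sb: "summable (\<lambda>n. norm (b n x * inverse z ^ n))"
    by (rule powser_insidea[OF _ nz])
  from sa sb have "(\<lambda>k. \<Sum>i\<le>k. (a i x * inverse z ^ i) * (b (k - i) x * inverse z ^ (k - i))) sums
      ((\<Sum>k. a k x * inverse z ^ k) * (\<Sum>k. b k x * inverse z ^ k))"
    by (rule Cauchy_product_sums)
  moreover have "(\<Sum>k. a k x * inverse z ^ k) = F x z" "(\<Sum>k. b k x * inverse z ^ k) = G x z"
    using assms(2,3) z by (auto simp: has_expansion_at_infinity_def sums_iff)
  moreover have "(\<Sum>i\<le>k. (a i x * inverse z ^ i) * (b (k - i) x * inverse z ^ (k - i)))
      = (\<Sum>i\<le>k. a i x * b (k - i) x) * inverse z ^ k" for k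
    unfolding sum_distrib_right
    by (intro sum.cong refl) (simp add: mult_ac flip: power_add)
  ultimately show "(\<lambda>n. (\<Sum>i\<le>n. a i x * b (n - i) x) * inverse z ^ n) sums (F x z * G x z)"
    by simp
qed

lemma expansion_at_infinity_unique:
  fixes c d :: "nat \<Rightarrow> complex"
  assumes M: "M \<ge> 0"
    and c: "\<forall>z. M < norm z \<longrightarrow> (\<lambda>n. c n * inverse z ^ n) sums f z"
    and d: "\<forall>z. M < norm z \<longrightarrow> (\<lambda>n. d n * inverse z ^ n) sums f z"
  shows "c = d"
proof -
  define e where "e n = c n - d n" for n
  define s where "s = 1 / (M + 1)"
  have s0: "0 < s" using M by (simp add: s_def)
  have S: "(\<lambda>n. e n * w ^ n) sums 0" if "w \<noteq> 0" "norm w < s" for w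
  proof -
    have "norm w * (M + 1) < 1" using that M by (simp add: s_def field_simps)
    moreover have "M * norm w \<le> norm w * (M + 1)" by (simp add: algebra_simps)
    ultimately have "M * norm w < 1" by linarith
    then have "M < 1 / norm w" using that by (simp add: field_simps)
    then have "M < norm (inverse w)" by (simp add: norm_inverse divide_inverse)
    then have "(\<lambda>n. c n * inverse (inverse w) ^ n) sums f (inverse w)"
      "(\<lambda>n. d n * inverse (inverse w) ^ n) sums f (inverse w)"
      using c d by auto
    from sums_diff[OF this]
    have "(\<lambda>n. c n * inverse (inverse w) ^ n - d n * inverse (inverse w) ^ n)
        sums (f (inverse w) - f (inverse w))" .
    then show ?thesis by (simp add: e_def left_diff_distrib)
  qed
  have "e n = 0" for n
  proof (induction n rule: less_induct)
    case (less n)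
    have "(\<lambda>k. e (k + n) * w ^ k) sums 0" if w: "w \<noteq> 0" "norm w < s" for w
    proof -
      have "(\<lambda>k. e (k + n) * w ^ (k + n)) sums 0"
        using sums_split_initial_segment[OF S[OF w], of n] less by simp
      then have "(\<lambda>k. inverse (w ^ n) * (e (k + n) * w ^ (k + n))) sums (inverse (w ^ n) * 0)"
        by (rule sums_mult)
      moreover have "inverse (w ^ n) * (e (k + n) * w ^ (k + n)) = e (k + n) * w ^ k" for k
        using w by (simp add: power_add field_simps)
      ultimately show ?thesis by simp
    qed
    then have "((\<lambda>w::complex. 0) \<longlongrightarrow> e (0 + n)) (at 0)"
      by (intro powser_limit_0_strong[OF s0]) auto
    then have "0 = e (0 + n)" by (rule LIM_const_eq)
    then show ?case by simp
  qed
  then show ?thesis by (auto simp: e_def fun_eq_iff)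
qed

definition has_polyfun_expansion :: "real \<Rightarrow> nat \<Rightarrow> (real^'v::finite \<Rightarrow> complex \<Rightarrow> complex) \<Rightarrow> bool"
  where "has_polyfun_expansion M k G \<longleftrightarrow> (\<exists>a. (\<forall>n. cpolyfun k (a n)) \<and> has_expansion_at_infinity M G a)"

lemma has_polyfun_expansion_add:
  assumes "has_polyfun_expansion M k F" "has_polyfun_expansion M k G"
  shows "has_polyfun_expansion M k (\<lambda>x z. F x z + G x z)"
proof -
  obtain a b where "\<forall>n. cpolyfun k (a n)" "has_expansion_at_infinity M F a"
    "\<forall>n. cpolyfun k (b n)" "has_expansion_at_infinity M G b"
    using assms unfolding has_polyfun_expansion_def by blast
  then show ?thesis unfolding has_polyfun_expansion_def
    by (intro exI[of _ "\<lambda>n x. a n x + b n x"]) (simp add: cpolyfun_add has_expansion_at_infinity_add)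
qed

lemma has_polyfun_expansion_diff:
  assumes "has_polyfun_expansion M k F" "has_polyfun_expansion M k G"
  shows "has_polyfun_expansion M k (\<lambda>x z. F x z - G x z)"
proof -
  obtain a b where "\<forall>n. cpolyfun k (a n)" "has_expansion_at_infinity M F a"
    "\<forall>n. cpolyfun k (b n)" "has_expansion_at_infinity M G b"
    using assms unfolding has_polyfun_expansion_def by blast
  then show ?thesis unfolding has_polyfun_expansion_def
    by (intro exI[of _ "\<lambda>n x. a n x - b n x"]) (simp add: cpolyfun_diff has_expansion_at_infinity_diff)
qed

lemma has_polyfun_expansion_mult:
  assumes "M \<ge> 0" "has_polyfun_expansion M i F" "has_polyfun_expansion M j G" "k \<le> i + j"
  shows "has_polyfun_expansion M k (\<lambda>x z. F x z * G x z)"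
proof -
  obtain a b where a: "\<forall>n. cpolyfun i (a n)" "has_expansion_at_infinity M F a"
    and b: "\<forall>n. cpolyfun j (b n)" "has_expansion_at_infinity M G b"
    using assms unfolding has_polyfun_expansion_def by blast
  have "cpolyfun k (\<lambda>x. \<Sum>l\<le>n. a l x * b (n - l) x)" for n
    using a(1) b(1) assms(4) by (intro cpolyfun_sum cpolyfun_mult_le) auto
  then show ?thesis
    unfolding has_polyfun_expansion_def
    using has_expansion_at_infinity_mult[OF assms(1) a(2) b(2)]
    by (intro exI[of _ "\<lambda>n x. \<Sum>l\<le>n. a l x * b (n - l) x"]) simp
qed

section \<open>The Laurent coefficients of the spectral invariants\<close>

lemma charpoly3_eq:
  "charpoly3 A = [: -det A,
     A$1$1*A$2$2 - A$1$2*A$2$1 + A$1$1*A$3$3 - A$1$3*A$3$1 + A$2$2*A$3$3 - A$2$3*A$3$2,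
     -(A$1$1 + A$2$2 + A$3$3), 1 :]"
  by (rule poly_eq_poly_eq_iff[THEN iffD1], rule ext)
    (simp add: charpoly3_def det_3 algebra_simps)

lemma pcoef_1: "pcoef 1 A = A$1$1 + A$2$2 + A$3$3"
  by (simp add: pcoef_def charpoly3_eq numeral_2_eq_2)

lemma pcoef_2:
  "pcoef 2 A = A$1$1*A$2$2 - A$1$2*A$2$1 + A$1$1*A$3$3 - A$1$3*A$3$1 + A$2$2*A$3$3 - A$2$3*A$3$2"
  by (simp add: pcoef_def charpoly3_eq)

lemma pcoef_3: "pcoef 3 A = det A"
  by (simp add: pcoef_def charpoly3_eq)

definition pole_radius :: "('n::finite \<Rightarrow> real) \<Rightarrow> real" where
  "pole_radius lam = Max ((\<lambda>a. \<bar>lam a\<bar>) ` UNIV)"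

lemma abs_le_pole_radius: "\<bar>lam a\<bar> \<le> pole_radius lam"
  unfolding pole_radius_def by (rule Max_ge) auto

lemma pole_radius_nonneg: "0 \<le> pole_radius lam"
  using abs_le_pole_radius[of lam undefined] by linarith

definition Lpole :: "('n::finite \<Rightarrow> real) \<Rightarrow> 3 \<Rightarrow> 3 \<Rightarrow> real^('n \<times> 3 \<times> 2) \<Rightarrow> complex \<Rightarrow> complex" where
  "Lpole lam i j x z =
     (\<Sum>a\<in>UNIV. (phi_of x $ a $ i * cnj (phi_of x $ a $ j)) * inverse (z - of_real (lam a)))"

definition Lpole_coeff :: "('n::finite \<Rightarrow> real) \<Rightarrow> 3 \<Rightarrow> 3 \<Rightarrow> nat \<Rightarrow> real^('n \<times> 3 \<times> 2) \<Rightarrow> complex" where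
  "Lpole_coeff lam i j n x =
     (\<Sum>a\<in>UNIV. (phi_of x $ a $ i * cnj (phi_of x $ a $ j)) *
        (if n = 0 then 0 else of_real (lam a) ^ (n - 1)))"

lemma Lmat_entry: "Lmat lam (phi_of x) z $ i $ j = Cmat $ i $ j + Lpole lam i j x z"
  by (simp add: Lmat_def Lpole_def mult.commute)

lemma has_expansion_at_infinity_Lpole:
  "has_expansion_at_infinity (pole_radius lam) (Lpole lam i j) (Lpole_coeff lam i j)"
  unfolding Lpole_def[abs_def] Lpole_coeff_def[abs_def]
  by (intro has_expansion_at_infinity_sum has_expansion_at_infinity_cmult
      has_expansion_at_infinity_inverse abs_le_pole_radius) simp

lemma cpolyfun_Lpole_coeff: "cpolyfun 2 (Lpole_coeff lam i j n)"
  unfolding Lpole_coeff_def[abs_def]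
  by (intro cpolyfun_sum cpolyfun_mult_le[of 2 _ 0, OF _ cpolyfun_const]
      cpolyfun_mult_le[OF cpolyfun_phi_of cpolyfun_cnj[OF cpolyfun_phi_of]]) auto

lemma has_polyfun_expansion_Lpole: "has_polyfun_expansion (pole_radius lam) 2 (Lpole lam i j)"
  unfolding has_polyfun_expansion_def
  using cpolyfun_Lpole_coeff has_expansion_at_infinity_Lpole by blast

lemma has_polyfun_expansion_Lpole_mult:
  "has_polyfun_expansion (pole_radius lam) 4 (\<lambda>x z. Lpole lam i j x z * Lpole lam k l x z)"
  by (rule has_polyfun_expansion_mult[OF pole_radius_nonneg has_polyfun_expansion_Lpole
        has_polyfun_expansion_Lpole]) simp

lemma has_polyfun_expansion_Lpole_mult3:
  "has_polyfun_expansion (pole_radius lam) 4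
     (\<lambda>x z. Lpole lam i j x z * Lpole lam k l x z * Lpole lam p q x z)"
  by (rule has_polyfun_expansion_mult[OF pole_radius_nonneg has_polyfun_expansion_Lpole_mult
        has_polyfun_expansion_Lpole]) simp

lemma has_polyfun_expansion_zero: "has_polyfun_expansion M k (\<lambda>x z. 0)"
  unfolding has_polyfun_expansion_def has_expansion_at_infinity_def
  by (intro exI[of _ "\<lambda>n x. 0"]) (simp add: cpolyfun_zero)

text \<open>Since \<open>C = diag(1, -1, 0)\<close>, the part of \<open>p\<^sub>k(C + X)\<close> linear in \<open>X\<close> is
  \<open>\<Sum>j. quad_sign k j * X\<^sub>j\<^sub>j\<close>.\<close>

definition quad_sign :: "nat \<Rightarrow> 3 \<Rightarrow> real" where
  "quad_sign k j =
     (if k = 1 then 1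
      else if k = 2 then (if j = 1 then -1 else if j = 2 then 1 else 0)
      else if j = 3 then -1 else 0)"

lemma pfun_split:
  assumes "k \<in> {1, 2, 3}"
  shows "\<exists>c G. has_polyfun_expansion (pole_radius lam) 4 G \<and>
           (\<forall>x z. pfun lam k (phi_of x) z =
              c + (\<Sum>j\<in>UNIV. of_real (quad_sign k j) * Lpole lam j j x z) + G x z)"
proof -
  let ?X = "\<lambda>x z. \<chi> i j. Lpole lam i j x z"
  have higher2: "has_polyfun_expansion (pole_radius lam) 4 (\<lambda>x z. pcoef 2 (?X x z))"
    unfolding pcoef_2
    by (simp, intro has_polyfun_expansion_add has_polyfun_expansion_diff has_polyfun_expansion_Lpole_mult)
  have higher3: "has_polyfun_expansion (pole_radius lam) 4
      (\<lambda>x z. Lpole lam 2 2 x z * Lpole lam 3 3 x z - Lpole lam 2 3 x z * Lpole lam 3 2 x z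
        - (Lpole lam 1 1 x z * Lpole lam 3 3 x z - Lpole lam 1 3 x z * Lpole lam 3 1 x z)
        + det (?X x z))"
    unfolding det_3
    by (simp, intro has_polyfun_expansion_add has_polyfun_expansion_diff
        has_polyfun_expansion_Lpole_mult has_polyfun_expansion_Lpole_mult3)
  consider "k = 1" | "k = 2" | "k = 3" using assms by auto
  then show ?thesis
  proof cases
    case 1
    show ?thesis
      unfolding 1 pfun_def pcoef_1
      by (intro exI[of _ 0] exI[of _ "\<lambda>x z. 0"] conjI has_polyfun_expansion_zero allI)
        (simp add: Lmat_entry Cmat_def quad_sign_def sum_3)
  next
    case 2
    show ?thesis
      using higher2 unfolding 2 pfun_def
      by (intro exI[of _ "-1"] exI[of _ "\<lambda>x z. pcoef 2 (?X x z)"] conjI allI)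
        (simp_all add: pcoef_2 Lmat_entry Cmat_def quad_sign_def sum_3 algebra_simps)
  next
    case 3
    show ?thesis
      using higher3 unfolding 3 pfun_def pcoef_3
      by (intro exI[of _ 0] exI conjI allI, assumption)
        (simp add: det_3 Lmat_entry Cmat_def quad_sign_def sum_3 algebra_simps)
  qed
qed

lemma laurent_coeffs_eqI:
  assumes "has_expansion_at_infinity (pole_radius lam) (\<lambda>x z. pfun lam k (phi_of x) z) a"
  shows "laurent_coeffs lam k (phi_of x) = (\<lambda>n. a n x)"
proof -
  have P: "\<forall>z. pole_radius lam < norm z \<longrightarrow> (\<lambda>n. a n x * inverse z ^ n) sums pfun lam k (phi_of x) z"
    using assms unfolding has_expansion_at_infinity_def by blast
  show ?thesis
    unfolding laurent_coeffs_def pole_radius_def[symmetric]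
  proof (rule the_equality)
    show "\<forall>z. pole_radius lam < norm z \<longrightarrow> (\<lambda>n. a n x * inverse z ^ n) sums pfun lam k (phi_of x) z"
      by (rule P)
  next
    fix c
    assume "\<forall>z. pole_radius lam < norm z \<longrightarrow> (\<lambda>n. c n * inverse z ^ n) sums pfun lam k (phi_of x) z"
    then show "c = (\<lambda>n. a n x)" using expansion_at_infinity_unique[OF pole_radius_nonneg _ P] by blast
  qed
qed

lemma sum_real_coords:
  "(\<Sum>v\<in>(UNIV::('n::finite \<times> 3 \<times> 2) set). f v) = (\<Sum>a\<in>UNIV. \<Sum>j\<in>UNIV. f (a, j, 1) + f (a, j, 2))"
proof -
  have "(\<Sum>v\<in>(UNIV::('n \<times> 3 \<times> 2) set). f v) = (\<Sum>a\<in>UNIV. \<Sum>v\<in>(UNIV::(3 \<times> 2) set). f (a, v))"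
    by (simp add: sum.cartesian_product flip: UNIV_Times_UNIV)
  also have "\<dots> = (\<Sum>a\<in>UNIV. \<Sum>j\<in>UNIV. \<Sum>i\<in>(UNIV::2 set). f (a, j, i))"
    by (simp add: sum.cartesian_product flip: UNIV_Times_UNIV)
  finally show ?thesis by (simp add: sum_2)
qed

lemma Re_Lpole_coeff_diag:
  "Re (Lpole_coeff lam j j (Suc m) x) = (\<Sum>a\<in>UNIV. lam a ^ m * ((x $ (a, j, 1))\<^sup>2 + (x $ (a, j, 2))\<^sup>2))"
  unfolding Lpole_coeff_def Re_sum
  by (intro sum.cong refl) (simp add: complex_mult_cnj phi_of_def mult.commute flip: of_real_power)

lemma sum_Re_Lpole_coeff_diag:
  "(\<Sum>j\<in>UNIV. s j * Re (Lpole_coeff lam j j (Suc m) x)) =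
     (\<Sum>v\<in>UNIV. lam (fst v) ^ m * s (fst (snd v)) * (x $ v)\<^sup>2)"
  by (simp add: Re_Lpole_coeff_diag sum_real_coords sum_distrib_left algebra_simps
      sum.swap[of _ "UNIV :: 3 set"])

lemma Ecoef_split:
  assumes "k \<in> {1, 2, 3}"
  shows "\<exists>b. (\<forall>n. cpolyfun 4 (b n)) \<and>
           (\<forall>x m. Ecoef lam k m (phi_of x) =
              (\<Sum>v\<in>UNIV. lam (fst v) ^ m * quad_sign k (fst (snd v)) * (x $ v)\<^sup>2) + Re (b (Suc m) x))"
proof -
  obtain c G where G: "has_polyfun_expansion (pole_radius lam) 4 G"
    and split: "\<And>x z. pfun lam k (phi_of x) z =
                  c + (\<Sum>j\<in>UNIV. of_real (quad_sign k j) * Lpole lam j j x z) + G x z"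
    using pfun_split[OF assms] by blast
  obtain b where b: "\<forall>n. cpolyfun 4 (b n)" "has_expansion_at_infinity (pole_radius lam) G b"
    using G unfolding has_polyfun_expansion_def by blast
  have "has_expansion_at_infinity (pole_radius lam) (\<lambda>x z. pfun lam k (phi_of x) z)
      (\<lambda>n x. (if n = 0 then c else 0) + (\<Sum>j\<in>UNIV. of_real (quad_sign k j) * Lpole_coeff lam j j n x)
        + b n x)"
    unfolding split
    by (intro has_expansion_at_infinity_add[OF has_expansion_at_infinity_add b(2)]
        has_expansion_at_infinity_const has_expansion_at_infinity_sum[OF finite_class.finite_UNIV]
        has_expansion_at_infinity_cmult has_expansion_at_infinity_Lpole)
  then show ?thesis
    using b(1) by (intro exI[of _ b]) (simp add: Ecoef_def laurent_coeffs_eqI Re_sum sum_Re_Lpole_coeff_diag)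
qed

definition Emap_weights :: "('n::finite \<Rightarrow> real) \<Rightarrow> ('n \<Rightarrow> nat) \<Rightarrow> real^('n \<times> 3 \<times> 2)^(3 \<times> 'n)" where
  "Emap_weights lam iota = (\<chi> r v. lam (fst v) ^ iota (snd r) * quad_sign (knat (fst r)) (fst (snd v)))"

lemma Emap_split:
  "\<exists>R. (\<forall>r. polyfun 4 (\<lambda>x. R x $ r)) \<and>
       Emap lam iota = (\<lambda>x. diag_quad (Emap_weights lam iota) x + R x)"
proof -
  have "knat k \<in> {1, 2, 3}" for k
    by (simp add: knat_def)
  then have "\<forall>k. \<exists>b. (\<forall>n. cpolyfun 4 (b n)) \<and> (\<forall>x m. Ecoef lam (knat k) m (phi_of x) =
      (\<Sum>v\<in>UNIV. lam (fst v) ^ m * quad_sign (knat k) (fst (snd v)) * (x $ v)\<^sup>2) + Re (b (Suc m) x))"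
    using Ecoef_split by blast
  then obtain B where B: "\<And>k n. cpolyfun 4 (B k n)"
    "\<And>k x m. Ecoef lam (knat k) m (phi_of x) =
      (\<Sum>v\<in>UNIV. lam (fst v) ^ m * quad_sign (knat k) (fst (snd v)) * (x $ v)\<^sup>2) + Re (B k (Suc m) x)"
    unfolding choice_iff by blast
  define R where "R x = (\<chi> r. Re (B (fst r) (Suc (iota (snd r))) x))" for x
  have "polyfun 4 (\<lambda>x. R x $ r)" for r
    using B(1) by (simp add: R_def cpolyfun_def)
  moreover have "Emap lam iota x = diag_quad (Emap_weights lam iota) x + R x" for x
    by (simp add: vec_eq_iff Emap_def B(2) diag_quad_def Emap_weights_def R_def)
  ultimately show ?thesis by blast
qed

section \<open>Nondegeneracy of the quadratic part\<close>

lemma vandermonde_kernel_trivial: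
  fixes lam :: "'n::finite \<Rightarrow> 'a::field" and w :: "'n \<Rightarrow> 'a"
  assumes inj: "inj lam" and h: "\<And>m. m < CARD('n) \<Longrightarrow> (\<Sum>a\<in>UNIV. lam a ^ m * w a) = 0"
  shows "w b = 0"
proof -
  define P where "P = (\<Prod>a\<in>UNIV - {b}. [:- lam a, 1:])"
  have "degree P \<le> (\<Sum>a\<in>UNIV - {b}. degree [:- lam a, 1:])"
    unfolding P_def using degree_prod_sum_le[of "UNIV - {b}" "\<lambda>a. [:- lam a, 1:]"] by (simp add: o_def)
  also have "\<dots> < CARD('n)" by (simp add: card_Diff_singleton)
  finally have degP: "degree P < CARD('n)" .
  have "(\<Sum>a\<in>UNIV. w a * poly P (lam a)) = (\<Sum>i\<le>degree P. coeff P i * (\<Sum>a\<in>UNIV. lam a ^ i * w a))"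
    by (simp add: poly_altdef sum_distrib_left mult_ac sum.swap[of _ UNIV])
  also have "\<dots> = 0" using h degP by (intro sum.neutral) auto
  finally have sum_0: "(\<Sum>a\<in>UNIV. w a * poly P (lam a)) = 0" .
  have "poly P (lam a) = 0" if "a \<noteq> b" for a
    using that unfolding P_def poly_prod by (intro prod_zero bexI[of _ a]) auto
  then have "(\<Sum>a\<in>UNIV. w a * poly P (lam a)) = w b * poly P (lam b)"
    by (subst sum.remove[of _ b]) auto
  moreover have "poly P (lam b) \<noteq> 0"
    unfolding P_def poly_prod using inj by (auto simp: inj_eq)
  ultimately show ?thesis using sum_0 by simp
qed

lemma quad_sign_kernel_trivial:
  assumes "\<And>k. (\<Sum>j\<in>UNIV. quad_sign (knat k) j * y j) = 0"
  shows "y j = 0"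
proof -
  have "y 1 + y 2 + y 3 = 0" "y 2 - y 1 = 0" "y 3 = 0"
    using assms[of 1] assms[of 2] assms[of 3] by (simp_all add: knat_def quad_sign_def sum_3)
  then show ?thesis using exhaust_3[of j] by auto
qed

lemma Emap_weights_minor_det_nonzero:
  fixes lam :: "'n::finite \<Rightarrow> real" and iota :: "'n \<Rightarrow> nat"
  assumes inj: "inj lam" and iota: "bij_betw iota UNIV {..<CARD('n)}"
  shows "det (\<chi> i j. Emap_weights lam iota $ i $ (snd j, fst j, 1)) \<noteq> 0"
proof -
  let ?M = "\<chi> i j. Emap_weights lam iota $ i $ (snd j, fst j, 1)"
  have sum_pairs: "(\<Sum>s\<in>UNIV. f s) = (\<Sum>j\<in>UNIV. \<Sum>a\<in>UNIV. f (j, a))" for f :: "3 \<times> 'n \<Rightarrow> real"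
    by (simp add: sum.cartesian_product flip: UNIV_Times_UNIV)
  have "u = 0" if u: "?M *v u = 0" for u
  proof -
    define w where "w k a = (\<Sum>j\<in>UNIV. quad_sign (knat k) j * u $ (j, a))" for k a
    have row: "(\<Sum>a\<in>UNIV. lam a ^ iota a' * w k a) = 0" for k a'
    proof -
      have "(?M *v u) $ (k, a') = (\<Sum>s\<in>UNIV. lam (snd s) ^ iota a' * (quad_sign (knat k) (fst s) * u $ s))"
        by (simp add: matrix_vector_mult_def Emap_weights_def mult_ac)
      also have "\<dots> = (\<Sum>a\<in>UNIV. lam a ^ iota a' * w k a)"
        by (simp add: sum_pairs w_def sum_distrib_left sum.swap[of _ "UNIV :: 'n set"])
      finally show ?thesis using u by simp
    qed
    have "w k a = 0" for k a
    proof (rule vandermonde_kernel_trivial[OF inj])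
      fix m assume "m < CARD('n)"
      then have "m \<in> iota ` UNIV" using bij_betw_imp_surj_on[OF iota] by simp
      then obtain a' where "iota a' = m" by (rule imageE) simp
      then show "(\<Sum>a\<in>UNIV. lam a ^ m * w k a) = 0" using row by blast
    qed
    then have "u $ (j, a) = 0" for j a
      using quad_sign_kernel_trivial[of "\<lambda>j. u $ (j, a)"] by (simp add: w_def)
    then show "u = 0" by (simp add: vec_eq_iff)
  qed
  then have "rank ?M = CARD(3 \<times> 'n)"
    using matrix_nonfull_linear_equations_eq[of ?M] by blast
  then show ?thesis by (simp add: det_eq_0_rank)
qed

theorem lemma5:
  fixes lam :: "'n::finite \<Rightarrow> real" and iota :: "'n \<Rightarrow> nat"
  assumes "inj lam" and "\<forall>a. lam a \<noteq> 0"
    and "bij_betw iota UNIV {..<CARD('n)}"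
  shows "\<exists>U::(real^('n \<times> 3 \<times> 2)) set. open U \<and> closure U = UNIV \<and>
           (\<forall>x\<in>U. Emap lam iota differentiable (at x) \<and>
                   rank (jacobian (Emap lam iota) (at x)) = 3 * CARD('n))"
proof -
  obtain R where R: "\<forall>r. polyfun 4 (\<lambda>x. R x $ r)"
    and E: "Emap lam iota = (\<lambda>x. diag_quad (Emap_weights lam iota) x + R x)"
    using Emap_split by blast
  define \<sigma> :: "3 \<times> 'n \<Rightarrow> 'n \<times> 3 \<times> 2" where "\<sigma> s = (snd s, fst s, 1)" for s
  have "det (\<chi> i j. Emap_weights lam iota $ i $ \<sigma> j) \<noteq> 0"
    unfolding \<sigma>_def using Emap_weights_minor_det_nonzero[OF assms(1,3)] .
  moreover have "polyfun 3 (\<lambda>x. R x $ r)" for r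
    by (rule polyfun_mono[OF R[rule_format]]) simp
  ultimately obtain x1 where "det (\<chi> i j. jacobian (Emap lam iota) (at x1) $ i $ \<sigma> j) \<noteq> 0"
    unfolding E using diag_quad_plus_higher_minor_nonzero by blast
  moreover have "polyfun 0 (\<lambda>x. Emap lam iota x $ r)" for r
    unfolding E
    by (simp, intro polyfun_add polyfun_mono[OF polyfun_diag_quad] polyfun_mono[OF R[rule_format]]) simp_all
  ultimately show ?thesis
    using polyfun_map_full_rank_open_dense[of "Emap lam iota" x1 \<sigma>] by simp
qed

end
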